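(* Let $\epsilon\in(0,1)$. Let $x\in\{0,1\}^m$ and $y\in\{0,1\}^k$ be random variables satisfying the $\epsilon$-martingale condition with respect to the ordering $x_1,\dots,x_m,y_1,\dots,y_k$. Then \[ \Pr[\mu_x(y)\ge0]\le 3\exp\bigl(-\epsilon^4(1-O(\epsilon))k/64\bigr). \]
   Context: Characteristic strings and forks. A characteristic string is $w=w_1\dots w_n\in\{0,1\}^n$; index $i$ is honest if $w_i=0$ and adversarial if $w_i=1$. A fork for $w$ is a rooted tree with edges directed away from the root $r$ and labeling $\ell:V\to\{0,\dots,n\}$ with (F1) $\ell(r)=0$; (F2) labels strictly increasing along directed paths; (F3) each honest index labels exactly one vertex; (F4) for honest $i<j$ the vertex labeled $i$ has strictly smaller depth than the vertex labeled $j$. Write $F\vdash w$. A vertex is honest if it is the root or labeled by an honest index. A tine is a directed path from the root; its length is its number of edges, $\ell(t)$ the label of its last vertex. A fork is closed if every leaf is honest; a closed fork has a unique longest tine $\hat t$. For closed $F\vdash w$ and tine $t$: $\mathrm{gap}(t)=\mathrm{length}(\hat t)-\mathrm{length}(t)$, $\mathrm{reserve}(t)=|\{i:w_i=1,\ i>\ell(t)\}|$, $\mathrm{reach}(t)=\mathrm{reserve}(t)-\mathrm{gap}(t)$. For $w=xy$, tines are disjoint over $y$ if they share no edge terminating at a vertex with label $>|x|$ (a tine may be paired with itself). $\mu_x(F)=\max\min\{\mathrm{reach}(t_1),\mathrm{reach}(t_2)\}$ over pairs disjoint over $y$, and $\mu_x(y)=\max\{\mu_x(F):F\vdash xy\text{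 closed}\}$. A sequence of $\{0,1\}$-valued random variables $Z_1,\dots,Z_N$ satisfies the $\epsilon$-martingale condition if for every $t$, $\Pr[Z_t=1\mid Z_1,\dots,Z_{t-1}]\le(1-\epsilon)/2$ for arbitrary conditioning values. *)

theory Defs
  imports "HOL-Probability.Probability" "HOL-Library.Sublist"
begin

text \<open>Characteristic strings are bool lists; entry True = 1 (adversarial),
  False = 0 (honest). Index i (1-based) of w is w ! (i - 1).\<close>

definition honest_idx :: "bool list \<Rightarrow> nat \<Rightarrow> bool" where
  "honest_idx w i \<longleftrightarrow> 1 \<le> i \<and> i \<le> length w \<and> \<not> w ! (i - 1)"

definition adv_idx :: "bool list \<Rightarrow> nat \<Rightarrow> bool" where
  "adv_idx w i \<longleftrightarrow> 1 \<le> i \<and> i \<le> length w \<and> w ! (i - 1)"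

text \<open>A fork is a rooted tree given as a finite prefix-closed set V of
  nat lists (tree addresses; the root is [], the children of v are the
  elements v @ [i] of V; depth of v = length v) together with a labelling l.
  The tine ending at vertex v is identified with v.\<close>

definition is_fork :: "bool list \<Rightarrow> nat list set \<Rightarrow> (nat list \<Rightarrow> nat) \<Rightarrow> bool" where
  "is_fork w V l \<longleftrightarrow>
     finite V \<and> [] \<in> V \<and> (\<forall>v i. v @ [i] \<in> V \<longrightarrow> v \<in> V) \<and>
     (\<forall>v\<in>V. l v \<le> length w) \<and>
     l [] = 0 \<and>
     (\<forall>u\<in>V. \<forall>v\<in>V. strict_prefix u v \<longrightarrow> l u < l v) \<and>
     (\<forall>i. honest_idx w i \<longrightarrow> card {v\<in>V. l v = i} = 1) \<and>
     (\<forall>u\<in>V. \<forall>v\<in>V. honest_idx w (l u) \<and> honest_idx w (l v) \<and> l u < l v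
          \<longrightarrow> length u < length v)"

definition honest_vertex :: "bool list \<Rightarrow> (nat list \<Rightarrow> nat) \<Rightarrow> nat list \<Rightarrow> bool" where
  "honest_vertex w l v \<longleftrightarrow> v = [] \<or> honest_idx w (l v)"

definition closed_fork :: "bool list \<Rightarrow> nat list set \<Rightarrow> (nat list \<Rightarrow> nat) \<Rightarrow> bool" where
  "closed_fork w V l \<longleftrightarrow> (\<forall>v\<in>V. (\<forall>i. v @ [i] \<notin> V) \<longrightarrow> honest_vertex w l v)"

definition fork_height :: "nat list set \<Rightarrow> nat" where
  "fork_height V = Max (length ` V)"

definition gap :: "nat list set \<Rightarrow> nat list \<Rightarrow> int" where
  "gap V t = int (fork_height V) - int (length t)"

definition reserve :: "bool list \<Rightarrow> (nat list \<Rightarrow> nat) \<Rightarrow> nat list \<Rightarrow> nat" where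
  "reserve w l t = card {i. adv_idx w i \<and> l t < i}"

definition reach :: "bool list \<Rightarrow> nat list set \<Rightarrow> (nat list \<Rightarrow> nat) \<Rightarrow> nat list \<Rightarrow> int" where
  "reach w V l t = int (reserve w l t) - gap V t"

text \<open>Tines t1, t2 (w = x y, |x| = m) are disjoint over y if they share no
  edge terminating at a vertex with label > m; the edges of the tine t end at
  the nonempty prefixes of t.\<close>
definition disjoint_over :: "nat \<Rightarrow> (nat list \<Rightarrow> nat) \<Rightarrow> nat list \<Rightarrow> nat list \<Rightarrow> bool" where
  "disjoint_over m l t1 t2 \<longleftrightarrow>
     (\<forall>u. u \<noteq> [] \<and> prefix u t1 \<and> prefix u t2 \<longrightarrow> l u \<le> m)"

definition mu_fork :: "nat \<Rightarrow> bool list \<Rightarrow> nat list set \<Rightarrow> (nat list \<Rightarrow> nat) \<Rightarrow> int" where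
  "mu_fork m w V l =
     Max {min (reach w V l t1) (reach w V l t2) | t1 t2.
            t1 \<in> V \<and> t2 \<in> V \<and> disjoint_over m l t1 t2}"

definition mu :: "bool list \<Rightarrow> bool list \<Rightarrow> int" where
  "mu x y = Max {mu_fork (length x) (x @ y) V l | V l.
                   is_fork (x @ y) V l \<and> closed_fork (x @ y) V l}"

text \<open>epsilon-martingale condition for a distribution p on bool lists of length n:
  for each position t (0-based) and each prefix value u,
  Pr[Z_t = 1 and prefix = u] <= (1-eps)/2 * Pr[prefix = u]
  (the conditional form, vacuous on null conditioning events).\<close>
definition eps_martingale :: "real \<Rightarrow> nat \<Rightarrow> bool list pmf \<Rightarrow> bool" where
  "eps_martingale \<epsilon> n p \<longleftrightarrow>
     (\<forall>t<n. \<forall>u. length u = t \<longrightarrow>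
        measure_pmf.prob p {w. take t w = u \<and> w ! t}
          \<le> (1 - \<epsilon>) / 2 * measure_pmf.prob p {w. take t w = u})"

end

theory Submission
  imports Defs
begin

text \<open>Stripping symbols off the end of the characteristic string turns a closed fork into a closed
  fork for the shorter string: after an adversarial symbol every reach drops by one, and after an
  honest symbol one passes to the subfork of tines leading to older honest vertices, where every
  tine has a prefix of larger reach, except the tine to the new honest vertex, whose reach is 0.
  Hence $\mu_x(y)$ is bounded by the second component of a simple recursion on pairs
  $(\rho, \mu)$ driven by the symbols of $y$, started at $(\rho(x), \rho(x))$.

  With $\gamma = 1 + \epsilon^2/4$, $\alpha = 1 + \epsilon$ and $\lambda = 1 - \epsilon^3/8$,
  the quantity $\gamma^{\rho}$ contracts by $\lambda$ up to an additive $\epsilon^2/8$ at every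
  symbol of $x$, so its expectation stays below $1/\epsilon$; along $y$ the potential
  $\gamma^{\rho} (\gamma/\alpha)^{\max(-\mu, 0)}$ contracts by $\lambda$ in expectation at
  every symbol.
  The potential is at least 1 when $\mu \ge 0$, so Markov's inequality gives
  $\Pr[\mu_x(y) \ge 0] \le \lambda^k/\epsilon \le 3 \exp(-\epsilon^4 k/64)$: the bound holds
  with $C = 0$.\<close>

lemma prefix_snoc_nth:
  assumes "prefix v u" "v \<noteq> u"
  shows "prefix (v @ [u ! length v]) u"
proof -
  obtain z zs where "u = v @ z # zs" using assms by (metis append_Nil2 neq_Nil_conv prefix_def)
  then show ?thesis by simp
qed

lemma fork_finite: "is_fork w V l \<Longrightarrow> finite V"
  unfolding is_fork_def by blast

lemma fork_root: "is_fork w V l \<Longrightarrow> [] \<in> V"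
  unfolding is_fork_def by blast

lemma fork_root_label: "is_fork w V l \<Longrightarrow> l [] = 0"
  unfolding is_fork_def by blast

lemma fork_prefix_closed:
  assumes "is_fork w V l" "v \<in> V" "prefix u v"
  shows "u \<in> V"
proof -
  have "u @ zs \<in> V \<Longrightarrow> u \<in> V" for zs
  proof (induction zs rule: rev_induct)
    case (snoc z zs)
    then show ?case using assms(1) unfolding is_fork_def by (metis append_assoc)
  qed simp
  then show ?thesis using assms(2,3) by (auto simp: prefix_def)
qed

lemma fork_label_mono:
  "is_fork w V l \<Longrightarrow> u \<in> V \<Longrightarrow> v \<in> V \<Longrightarrow> strict_prefix u v \<Longrightarrow> l u < l v"
  unfolding is_fork_def by blast

lemma fork_label_le_length: "is_fork w V l \<Longrightarrow> v \<in> V \<Longrightarrow> l v \<le> length w"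
  unfolding is_fork_def by blast

lemma fork_length_le_label:
  assumes "is_fork w V l" "v \<in> V"
  shows "length v \<le> l v"
  using assms(2)
proof (induction v rule: rev_induct)
  case (snoc x v)
  have "v \<in> V" using fork_prefix_closed[OF assms(1) snoc.prems] by simp
  moreover have "l v < l (v @ [x])"
    using fork_label_mono[OF assms(1) \<open>v \<in> V\<close> snoc.prems] by (simp add: strict_prefix_def)
  ultimately show ?case using snoc.IH by simp
qed simp

lemma fork_label_prefix_le:
  assumes "is_fork w V l" "v \<in> V" "prefix u v"
  shows "l u \<le> l v"
proof (cases "u = v")
  case False
  then have "strict_prefix u v" using assms(3) by (simp add: strict_prefix_def)
  then show ?thesis using fork_label_mono[OF assms(1) fork_prefix_closed[OF assms] assms(2)] by simp
qed simp

lemma fork_label_pos: "is_fork w V l \<Longrightarrow> v \<in> V \<Longrightarrow> v \<noteq> [] \<Longrightarrow> 0 < l v"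
  using fork_label_mono[of w V l "[]" v] fork_root[of w V l] fork_root_label[of w V l]
  by (simp add: strict_prefix_def)

lemma fork_honest_depth:
  "is_fork w V l \<Longrightarrow> u \<in> V \<Longrightarrow> v \<in> V \<Longrightarrow> honest_idx w (l u) \<Longrightarrow> honest_idx w (l v)
    \<Longrightarrow> l u < l v \<Longrightarrow> length u < length v"
  unfolding is_fork_def by blast

lemma fork_honest_card: "is_fork w V l \<Longrightarrow> honest_idx w i \<Longrightarrow> card {v\<in>V. l v = i} = 1"
  unfolding is_fork_def by blast

lemma fork_honest_label_unique:
  assumes "is_fork w V l" "honest_idx w i" "u \<in> V" "v \<in> V" "l u = i" "l v = i"
  shows "u = v"
proof -
  obtain x where "{v\<in>V. l v = i} = {x}"
    using fork_honest_card[OF assms(1,2)] by (rule card_1_singletonE)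
  then show ?thesis using assms(3-6) by (metis (mono_tags, lifting) mem_Collect_eq singleton_iff)
qed

lemma fork_max_label_leaf:
  assumes "is_fork w V l" "v \<in> V" "l v = length w"
  shows "v @ [i] \<notin> V"
proof
  assume "v @ [i] \<in> V"
  then have "l v < l (v @ [i])"
    using fork_label_mono[OF assms(1,2)] by (simp add: strict_prefix_def)
  then show False using fork_label_le_length[OF assms(1) \<open>v @ [i] \<in> V\<close>] assms(3) by simp
qed

lemma fork_length_le_height: "is_fork w V l \<Longrightarrow> t \<in> V \<Longrightarrow> length t \<le> fork_height V"
  unfolding fork_height_def by (simp add: fork_finite)

lemma fork_height_attained:
  assumes "is_fork w V l"
  obtains v where "v \<in> V" "fork_height V = length v"
proof -
  have "finite V" "V \<noteq> {}" using fork_finite[OF assms] fork_root[OF assms] by auto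
  then have "fork_height V \<in> length ` V" unfolding fork_height_def by (intro Max_in) auto
  then show ?thesis using that by blast
qed

lemma fork_height_le_length:
  assumes "is_fork w V l"
  shows "fork_height V \<le> length w"
proof -
  obtain v where "v \<in> V" "fork_height V = length v" using fork_height_attained[OF assms] .
  then show ?thesis using fork_length_le_label[OF assms] fork_label_le_length[OF assms] by force
qed

lemma reach_ge_neg_length: "is_fork w V l \<Longrightarrow> t \<in> V \<Longrightarrow> - int (length w) \<le> reach w V l t"
  unfolding reach_def gap_def using fork_height_le_length by force

lemma closed_fork_extends_to_honest:
  assumes f: "is_fork w V l" and c: "closed_fork w V l" and v: "v \<in> V"
  obtains u where "u \<in> V" "prefix v u" "honest_vertex w l u"
proof -
  have "\<exists>u. (u \<in> V \<and> prefix v u) \<and> (\<forall>y. y \<in> V \<and> prefix v y \<longrightarrow> length y \<le> length u)"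
    using v fork_length_le_label[OF f] fork_label_le_length[OF f]
    by (intro ex_has_greatest_nat[where b = "Suc (length w)"])
      (blast, meson le_trans le_imp_less_Suc)
  then obtain u where u: "u \<in> V" "prefix v u"
    and longest: "\<And>y. y \<in> V \<Longrightarrow> prefix v y \<Longrightarrow> length y \<le> length u"
    by blast
  have "u @ [i] \<notin> V" for i
  proof
    assume "u @ [i] \<in> V"
    moreover have "prefix v (u @ [i])" using u(2) by (simp add: prefix_order.trans)
    ultimately have "length (u @ [i]) \<le> length u" by (rule longest)
    then show False by simp
  qed
  then have "honest_vertex w l u" using c u(1) unfolding closed_fork_def by blast
  with u show ?thesis by (rule that)
qed

lemma honest_idx_snoc: "honest_idx (w @ [b]) i \<longleftrightarrow> honest_idx w i \<or> (i = Suc (length w) \<and> \<not> b)"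
  unfolding honest_idx_def by (cases "i \<le> length w") (auto simp: nth_append)

lemma adv_idx_snoc: "adv_idx (w @ [b]) i \<longleftrightarrow> adv_idx w i \<or> (i = Suc (length w) \<and> b)"
  unfolding adv_idx_def by (cases "i \<le> length w") (auto simp: nth_append)

lemma finite_adv_idx: "finite {i. adv_idx w i \<and> P i}"
  by (rule finite_subset[of _ "{..length w}"]) (auto simp: adv_idx_def)

lemma reserve_antimono: "l u \<le> l t \<Longrightarrow> reserve w l t \<le> reserve w l u"
  unfolding reserve_def by (intro card_mono finite_adv_idx) auto

lemma reserve_Suc_le:
  assumes "adv_idx w (l t)" "l u < l t"
  shows "Suc (reserve w l t) \<le> reserve w l u"
proof -
  have "insert (l t) {i. adv_idx w i \<and> l t < i} \<subseteq> {i. adv_idx w i \<and> l u < i}"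
    using assms by auto
  then have "card (insert (l t) {i. adv_idx w i \<and> l t < i}) \<le> reserve w l u"
    unfolding reserve_def by (intro card_mono finite_adv_idx)
  then show ?thesis unfolding reserve_def by (simp add: finite_adv_idx)
qed

lemma reserve_eq_0: "length w \<le> l t \<Longrightarrow> reserve w l t = 0"
  unfolding reserve_def adv_idx_def by auto

lemma reserve_snoc_True:
  assumes "l t \<le> length w"
  shows "reserve (w @ [True]) l t = Suc (reserve w l t)"
proof -
  have "{i. adv_idx (w @ [True]) i \<and> l t < i} = insert (Suc (length w)) {i. adv_idx w i \<and> l t < i}"
    using assms by (auto simp: adv_idx_snoc)
  moreover have "Suc (length w) \<notin> {i. adv_idx w i \<and> l t < i}"
    by (simp add: adv_idx_def)
  ultimately show ?thesis unfolding reserve_def by (simp add: finite_adv_idx)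
qed

lemma reserve_snoc_False: "reserve (w @ [False]) l t = reserve w l t"
  unfolding reserve_def by (simp add: adv_idx_snoc)

section \<open>Removing the last symbol of a closed fork\<close>

text \<open>A vertex with the last label is a leaf, so in a closed fork it is honest.\<close>

lemma closed_fork_snoc_True_label_le:
  assumes f: "is_fork (w @ [True]) V l" and c: "closed_fork (w @ [True]) V l" and v: "v \<in> V"
  shows "l v \<le> length w"
proof (rule ccontr)
  assume "\<not> l v \<le> length w"
  then have last: "l v = length (w @ [True])" using fork_label_le_length[OF f v] by simp
  then have "honest_vertex (w @ [True]) l v"
    using c v fork_max_label_leaf[OF f v] unfolding closed_fork_def by blast
  moreover have "v \<noteq> []" using last fork_root_label[OF f] by auto
  ultimately show False using last by (simp add: honest_vertex_def honest_idx_snoc honest_idx_def)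
qed

lemma closed_fork_snoc_True:
  assumes f: "is_fork (w @ [True]) V l" and c: "closed_fork (w @ [True]) V l"
  shows "is_fork w V l" "closed_fork w V l"
    and "t \<in> V \<Longrightarrow> reach (w @ [True]) V l t = reach w V l t + 1"
proof -
  note label_le = closed_fork_snoc_True_label_le[OF f c]
  show "is_fork w V l"
    using f label_le unfolding is_fork_def by (simp add: honest_idx_snoc)
  show "closed_fork w V l"
    using c label_le unfolding closed_fork_def honest_vertex_def by (force simp: honest_idx_snoc)
  show "t \<in> V \<Longrightarrow> reach (w @ [True]) V l t = reach w V l t + 1"
    using reserve_snoc_True[OF label_le] unfolding reach_def by simp
qed

definition honest_subfork :: "bool list \<Rightarrow> nat list set \<Rightarrow> (nat list \<Rightarrow> nat) \<Rightarrow> nat list set" where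
  "honest_subfork w V l = {v \<in> V. \<exists>u\<in>V. prefix v u \<and> honest_vertex w l u}"

lemma honest_vertex_label_le: "l [] = 0 \<Longrightarrow> honest_vertex w l u \<Longrightarrow> l u \<le> length w"
  unfolding honest_vertex_def honest_idx_def by auto

lemma honest_subfork_is_fork:
  assumes f: "is_fork (w @ [b]) V l"
  shows "is_fork w (honest_subfork w V l) l"
  unfolding is_fork_def
proof (intro conjI)
  let ?V' = "honest_subfork w V l"
  have sub: "?V' \<subseteq> V" unfolding honest_subfork_def by blast
  show "finite ?V'" using finite_subset[OF sub fork_finite[OF f]] .
  show "[] \<in> ?V'"
    unfolding honest_subfork_def honest_vertex_def using fork_root[OF f] by blast
  show "\<forall>v i. v @ [i] \<in> ?V' \<longrightarrow> v \<in> ?V'"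
  proof (intro allI impI)
    fix v i assume "v @ [i] \<in> ?V'"
    then obtain u where u: "u \<in> V" "prefix (v @ [i]) u" "honest_vertex w l u"
      unfolding honest_subfork_def by blast
    then have "prefix v u" using prefix_order.trans[of v "v @ [i]" u] by simp
    then show "v \<in> ?V'" unfolding honest_subfork_def using fork_prefix_closed[OF f u(1)] u by blast
  qed
  show "\<forall>v\<in>?V'. l v \<le> length w"
    unfolding honest_subfork_def
    using fork_label_prefix_le[OF f] honest_vertex_label_le[of l, OF fork_root_label[OF f]]
    by (blast intro: le_trans)
  show "l [] = 0" using fork_root_label[OF f] .
  show "\<forall>u\<in>?V'. \<forall>v\<in>?V'. strict_prefix u v \<longrightarrow> l u < l v"
    using fork_label_mono[OF f] sub by blast
  show "\<forall>i. honest_idx w i \<longrightarrow> card {v\<in>?V'. l v = i} = 1"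
  proof (intro allI impI)
    fix i assume i: "honest_idx w i"
    then have "{v\<in>?V'. l v = i} = {v\<in>V. l v = i}"
      unfolding honest_subfork_def honest_vertex_def by auto
    then show "card {v\<in>?V'. l v = i} = 1"
      using fork_honest_card[OF f] i by (simp add: honest_idx_snoc)
  qed
  show "\<forall>u\<in>?V'. \<forall>v\<in>?V'. honest_idx w (l u) \<and> honest_idx w (l v) \<and> l u < l v
      \<longrightarrow> length u < length v"
    using fork_honest_depth[OF f] sub by (blast intro: honest_idx_snoc[THEN iffD2])
qed

lemma honest_subfork_closed:
  assumes f: "is_fork (w @ [b]) V l"
  shows "closed_fork w (honest_subfork w V l) l"
  unfolding closed_fork_def
proof (intro ballI impI)
  fix v assume "v \<in> honest_subfork w V l" and leaf: "\<forall>i. v @ [i] \<notin> honest_subfork w V l"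
  then obtain u where u: "u \<in> V" "prefix v u" "honest_vertex w l u"
    unfolding honest_subfork_def by blast
  show "honest_vertex w l v"
  proof (cases "v = u")
    case False
    then have "prefix (v @ [u ! length v]) u" using u(2) by (rule prefix_snoc_nth[rotated])
    then have "v @ [u ! length v] \<in> honest_subfork w V l"
      unfolding honest_subfork_def using fork_prefix_closed[OF f u(1)] u by blast
    then show ?thesis using leaf by blast
  qed (use u in simp)
qed

lemma honest_snoc_shallower:
  assumes f: "is_fork (w @ [False]) V l" and h: "h \<in> V" "l h = Suc (length w)"
    and u: "u \<in> V" "honest_vertex (w @ [False]) l u" "l u \<le> length w"
  shows "length u < length h"
proof (cases "u = []")
  case True
  then show ?thesis using h(2) fork_root_label[OF f] by (cases h) auto
next
  case False
  then have "honest_idx (w @ [False]) (l u)" using u(2) unfolding honest_vertex_def by simp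
  moreover have "honest_idx (w @ [False]) (l h)" using h(2) by (simp add: honest_idx_snoc)
  ultimately show ?thesis using fork_honest_depth[OF f u(1) h(1)] u(3) h(2) by simp
qed

lemma honest_snoc_height:
  assumes f: "is_fork (w @ [False]) V l" and c: "closed_fork (w @ [False]) V l"
    and h: "h \<in> V" "l h = Suc (length w)"
  shows "fork_height V = length h"
proof -
  have "length v \<le> length h" if v: "v \<in> V" for v
  proof -
    obtain u where u: "u \<in> V" "prefix v u" "honest_vertex (w @ [False]) l u"
      using closed_fork_extends_to_honest[OF f c v] .
    have "length u \<le> length h"
    proof (cases "l u \<le> length w")
      case True
      then show ?thesis using honest_snoc_shallower[OF f h u(1,3)] by simp
    next
      case False
      then have "l u = Suc (length w)" using fork_label_le_length[OF f u(1)] by simp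
      then have "u = h" using fork_honest_label_unique[OF f _ u(1) h(1)] h(2)
        by (simp add: honest_idx_snoc)
      then show ?thesis by simp
    qed
    then show ?thesis using prefix_length_le[OF u(2)] by simp
  qed
  then show ?thesis
    unfolding fork_height_def using fork_finite[OF f] h(1) by (intro Max_eqI) auto
qed

lemma honest_subfork_height_less:
  assumes f: "is_fork (w @ [False]) V l" and h: "h \<in> V" "l h = Suc (length w)"
  shows "fork_height (honest_subfork w V l) < length h"
proof -
  obtain v where v: "v \<in> honest_subfork w V l" "fork_height (honest_subfork w V l) = length v"
    using fork_height_attained[OF honest_subfork_is_fork[OF f]] .
  then obtain u where u: "u \<in> V" "prefix v u" "honest_vertex w l u"
    unfolding honest_subfork_def by blast
  have "honest_vertex (w @ [False]) l u"
    using u(3) by (auto simp: honest_vertex_def honest_idx_snoc)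
  moreover have "l u \<le> length w"
    using honest_vertex_label_le[of l, OF fork_root_label[OF f] u(3)] .
  ultimately have "length u < length h" using honest_snoc_shallower[OF f h u(1)] by blast
  then show ?thesis using v(2) prefix_length_le[OF u(2)] by simp
qed

text \<open>Walking down a tine towards the root, every vertex outside the honest subfork carries an
  adversarial label of \<open>w\<close>, except possibly the new honest vertex.\<close>

lemma honest_subfork_reserve:
  assumes f: "is_fork (w @ [False]) V l" and t: "t \<in> V"
  shows "\<exists>u\<in>honest_subfork w V l. prefix u t \<and>
    reserve w l t + length t \<le> reserve w l u + length u + (if l t = Suc (length w) then 1 else 0)"
  using t
proof (induction t rule: rev_induct)
  case Nil
  then show ?case using fork_root[OF honest_subfork_is_fork[OF f]] by force
next
  case (snoc x p)
  let ?V' = "honest_subfork w V l" and ?t = "p @ [x]"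
  show ?case
  proof (cases "?t \<in> ?V'")
    case True
    then show ?thesis by (intro bexI[of _ ?t]) simp_all
  next
    case False
    have p: "p \<in> V" using fork_prefix_closed[OF f snoc.prems] by simp
    have lp: "l p < l ?t" using fork_label_mono[OF f p snoc.prems] by (simp add: strict_prefix_def)
    have lt: "l ?t \<le> Suc (length w)" using fork_label_le_length[OF f snoc.prems] by simp
    obtain u where u: "u \<in> ?V'" "prefix u p"
      and IH: "reserve w l p + length p \<le> reserve w l u + length u"
      using snoc.IH[OF p] lp lt by (auto split: if_splits)
    have step: "reserve w l ?t + 1 \<le> reserve w l p + (if l ?t = Suc (length w) then 1 else 0)"
    proof (cases "l ?t = Suc (length w)")
      case True
      then show ?thesis using reserve_antimono[of l p ?t w] lp by simp
    next
      case False
      have "\<not> honest_idx w (l ?t)"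
        using \<open>?t \<notin> ?V'\<close> snoc.prems unfolding honest_subfork_def honest_vertex_def by blast
      moreover have "0 < l ?t" using fork_label_pos[OF f snoc.prems] by simp
      ultimately have "adv_idx w (l ?t)" using False lt unfolding honest_idx_def adv_idx_def by auto
      then show ?thesis using reserve_Suc_le[OF _ lp] False by simp
    qed
    then have "reserve w l ?t + length ?t
        \<le> reserve w l u + length u + (if l ?t = Suc (length w) then 1 else 0)"
      using IH by simp
    moreover have "prefix u ?t" using u(2) by (simp add: prefix_prefix)
    ultimately show ?thesis using u(1) by (intro bexI[of _ u]) simp_all
  qed
qed

lemma honest_snoc_reach:
  assumes f: "is_fork (w @ [False]) V l" and c: "closed_fork (w @ [False]) V l" and t: "t \<in> V"
  shows "\<exists>u\<in>honest_subfork w V l. prefix u t \<and>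
    reach (w @ [False]) V l t + (if l t = Suc (length w) then 0 else 1)
      \<le> reach w (honest_subfork w V l) l u"
proof -
  have "honest_idx (w @ [False]) (Suc (length w))" by (simp add: honest_idx_snoc)
  then obtain h where "{v\<in>V. l v = Suc (length w)} = {h}"
    using fork_honest_card[OF f] by (metis card_1_singletonE)
  then have "h \<in> V" "l h = Suc (length w)" by auto
  note height = honest_snoc_height[OF f c this] honest_subfork_height_less[OF f this]
  obtain u where "u \<in> honest_subfork w V l" "prefix u t"
    "reserve w l t + length t \<le> reserve w l u + length u + (if l t = Suc (length w) then 1 else 0)"
    using honest_subfork_reserve[OF f t] by blast
  then show ?thesis
    using height unfolding reach_def gap_def reserve_snoc_False by (intro bexI[of _ u]) auto
qed

lemma honest_snoc_reach_last:
  assumes f: "is_fork (w @ [False]) V l" and c: "closed_fork (w @ [False]) V l"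
    and t: "t \<in> V" "l t = Suc (length w)"
  shows "reach (w @ [False]) V l t = 0"
  using honest_snoc_height[OF f c t] reserve_eq_0[of "w @ [False]" l t] t(2)
  unfolding reach_def gap_def by simp

section \<open>Recursive upper bounds for reach and margin\<close>

text \<open>These are the recursions satisfied by the paper's $\rho(w)$ and $(\rho(xy), \mu_x(y))$;
  only the upper bounds are needed here. Subtraction on \<open>nat\<close> truncates, so
  \<open>rho_step r False\<close> is $\max(r - 1, 0)$.\<close>

definition rho_step :: "nat \<Rightarrow> bool \<Rightarrow> nat" where
  "rho_step r b = (if b then Suc r else r - 1)"

definition rho :: "bool list \<Rightarrow> nat" where
  "rho w = foldl rho_step 0 w"

definition margin_step :: "nat \<times> int \<Rightarrow> bool \<Rightarrow> nat \<times> int" where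
  "margin_step s b =
     (rho_step (fst s) b, if b then snd s + 1 else if snd s = 0 \<and> 0 < fst s then 0 else snd s - 1)"

definition margin_state :: "bool list \<Rightarrow> bool list \<Rightarrow> nat \<times> int" where
  "margin_state x y = foldl margin_step (rho x, int (rho x)) y"

lemma rho_snoc: "rho (w @ [b]) = rho_step (rho w) b"
  by (simp add: rho_def)

lemma margin_state_Nil: "margin_state x [] = (rho x, int (rho x))"
  by (simp add: margin_state_def)

lemma margin_state_snoc: "margin_state x (y @ [b]) = margin_step (margin_state x y) b"
  by (simp add: margin_state_def)

lemma fst_margin_state: "fst (margin_state x y) = rho (x @ y)"
  by (induction y rule: rev_induct)
    (simp_all add: margin_state_Nil margin_state_snoc margin_step_def rho_snoc flip: append_assoc)

lemma snd_margin_state_le: "snd (margin_state x y) \<le> int (fst (margin_state x y))"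
  by (induction y rule: rev_induct)
    (auto simp: margin_state_Nil margin_state_snoc margin_step_def rho_step_def)

lemma reach_le_rho:
  "is_fork w V l \<Longrightarrow> closed_fork w V l \<Longrightarrow> t \<in> V \<Longrightarrow> reach w V l t \<le> int (rho w)"
proof (induction w arbitrary: V l t rule: rev_induct)
  case Nil
  then show ?case
    using fork_length_le_height[OF Nil(1,3)] reserve_eq_0[of "[]" l t]
    by (simp add: reach_def gap_def rho_def)
next
  case (snoc b w)
  show ?case
  proof (cases b)
    case True
    then show ?thesis
      using closed_fork_snoc_True[of w V l] snoc snoc.IH[of V l t]
      by (simp add: rho_snoc rho_step_def)
  next
    case False
    have f: "is_fork (w @ [False]) V l" and c: "closed_fork (w @ [False]) V l"
      using snoc.prems(1,2) False by simp_all
    obtain u where u: "u \<in> honest_subfork w V l"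
      and le: "reach (w @ [False]) V l t + (if l t = Suc (length w) then 0 else 1)
        \<le> reach w (honest_subfork w V l) l u"
      using honest_snoc_reach[OF f c snoc.prems(3)] by blast
    have "reach w (honest_subfork w V l) l u \<le> int (rho w)"
      using snoc.IH[OF honest_subfork_is_fork[OF f] honest_subfork_closed[OF f] u] .
    then show ?thesis
      using le honest_snoc_reach_last[OF f c snoc.prems(3)] False
      by (auto simp: rho_snoc rho_step_def split: if_splits)
  qed
qed

lemma disjoint_over_prefix:
  "disjoint_over m l t1 t2 \<Longrightarrow> prefix u1 t1 \<Longrightarrow> prefix u2 t2 \<Longrightarrow> disjoint_over m l u1 u2"
  unfolding disjoint_over_def using prefix_order.trans by blast

lemma min_reach_snoc_False_le:
  assumes f: "is_fork (w @ [False]) V l" and c: "closed_fork (w @ [False]) V l"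
    and t: "t1 \<in> V" "t2 \<in> V" and disj: "disjoint_over m l t1 t2" and m: "m \<le> length w"
    and IH: "\<And>u1 u2. u1 \<in> honest_subfork w V l \<Longrightarrow> u2 \<in> honest_subfork w V l \<Longrightarrow>
      disjoint_over m l u1 u2 \<Longrightarrow>
      min (reach w (honest_subfork w V l) l u1) (reach w (honest_subfork w V l) l u2) \<le> M"
  shows "min (reach (w @ [False]) V l t1) (reach (w @ [False]) V l t2)
    \<le> (if M = 0 \<and> 0 < rho w then 0 else M - 1)"
proof -
  let ?V' = "honest_subfork w V l" and ?n = "Suc (length w)"
  let ?r = "reach (w @ [False]) V l" and ?r' = "reach w ?V' l"
  obtain u1 where u1: "u1 \<in> ?V'" "prefix u1 t1"
    and le1: "?r t1 + (if l t1 = ?n then 0 else 1) \<le> ?r' u1"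
    using honest_snoc_reach[OF f c t(1)] by blast
  obtain u2 where u2: "u2 \<in> ?V'" "prefix u2 t2"
    and le2: "?r t2 + (if l t2 = ?n then 0 else 1) \<le> ?r' u2"
    using honest_snoc_reach[OF f c t(2)] by blast
  have min_le: "min (?r' u1) (?r' u2) \<le> M"
    using IH[OF u1(1) u2(1) disjoint_over_prefix[OF disj u1(2) u2(2)]] .
  have rho: "?r' u1 \<le> int (rho w)" "?r' u2 \<le> int (rho w)"
    using reach_le_rho[OF honest_subfork_is_fork[OF f] honest_subfork_closed[OF f]] u1 u2 by auto
  have not_both: "\<not> (l t1 = ?n \<and> l t2 = ?n)"
  proof
    assume last: "l t1 = ?n \<and> l t2 = ?n"
    moreover have "honest_idx (w @ [False]) ?n" by (simp add: honest_idx_snoc)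
    ultimately have "t1 = t2" "t1 \<noteq> []"
      using fork_honest_label_unique[OF f _ t] fork_root_label[OF f] by auto
    then show False using disj last m unfolding disjoint_over_def by auto
  qed
  show ?thesis
    using min_le rho le1 le2 not_both honest_snoc_reach_last[OF f c t(1)]
      honest_snoc_reach_last[OF f c t(2)]
    by (auto simp: min_def split: if_splits)
qed

lemma min_reach_le_margin:
  "is_fork (x @ y) V l \<Longrightarrow> closed_fork (x @ y) V l \<Longrightarrow> t1 \<in> V \<Longrightarrow> t2 \<in> V \<Longrightarrow>
    disjoint_over (length x) l t1 t2 \<Longrightarrow>
    min (reach (x @ y) V l t1) (reach (x @ y) V l t2) \<le> snd (margin_state x y)"
proof (induction y arbitrary: V l t1 t2 rule: rev_induct)
  case Nil
  then show ?case using reach_le_rho[of x V l t1] by (simp add: margin_state_Nil)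
next
  case (snoc b y)
  obtain R M where RM: "margin_state x y = (R, M)" by fastforce
  have R: "R = rho (x @ y)" using fst_margin_state[of x y] RM by simp
  show ?case
  proof (cases b)
    case True
    then show ?thesis
      using closed_fork_snoc_True[of "x @ y" V l] snoc.prems snoc.IH[of V l t1 t2] RM
      by (simp add: margin_state_snoc margin_step_def)
  next
    case False
    have f: "is_fork ((x @ y) @ [False]) V l" and c: "closed_fork ((x @ y) @ [False]) V l"
      using snoc.prems(1,2) False by simp_all
    have "min (reach ((x @ y) @ [False]) V l t1) (reach ((x @ y) @ [False]) V l t2)
        \<le> (if M = 0 \<and> 0 < rho (x @ y) then 0 else M - 1)"
    proof (rule min_reach_snoc_False_le[OF f c snoc.prems(3-5)])
      fix u1 u2 assume "u1 \<in> honest_subfork (x @ y) V l" "u2 \<in> honest_subfork (x @ y) V l"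
        "disjoint_over (length x) l u1 u2"
      then show "min (reach (x @ y) (honest_subfork (x @ y) V l) l u1)
          (reach (x @ y) (honest_subfork (x @ y) V l) l u2) \<le> M"
        using snoc.IH honest_subfork_is_fork[OF f] honest_subfork_closed[OF f] RM by simp
    qed simp
    moreover have "snd (margin_state x (y @ [False])) = (if M = 0 \<and> 0 < R then 0 else M - 1)"
      using RM by (simp add: margin_state_snoc margin_step_def)
    ultimately show ?thesis using False R by simp
  qed
qed

lemma chain_is_fork:
  assumes sorted: "sorted_wrt (<) (0 # ns)" and set_ns: "set ns = {i. honest_idx w i}"
  shows "is_fork w {v. set v \<subseteq> {0} \<and> length v \<le> length ns} (\<lambda>v. (0 # ns) ! length v)"
proof -
  define hs where "hs = 0 # ns"
  define V where "V = {v :: nat list. set v \<subseteq> {0} \<and> length v \<le> length ns}"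
  define l where "l v = hs ! length v" for v :: "nat list"
  have hs_honest: "honest_idx w (hs ! j)" if "0 < j" "j \<le> length ns" for j
    using that set_ns nth_mem[of "j - 1" ns] by (auto simp: hs_def nth_Cons')
  have l_mono: "l u < l v" if "length u < length v" "v \<in> V" for u v
    using that sorted_wrt_nth_less[OF sorted, of "length u" "length v"]
    by (simp add: l_def V_def hs_def)
  have V_replicate: "v = replicate (length v) 0" if "v \<in> V" for v
  proof -
    have "\<forall>y\<in>set v. y = 0" using that unfolding V_def by auto
    then show ?thesis using replicate_length_same[of v 0] by simp
  qed
  have "is_fork w V l"
    unfolding is_fork_def
  proof (intro conjI)
    show "finite V" unfolding V_def by (intro finite_lists_length_le) simp
    show "[] \<in> V" by (simp add: V_def)
    show "\<forall>v i. v @ [i] \<in> V \<longrightarrow> v \<in> V" by (simp add: V_def)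
    show "\<forall>v\<in>V. l v \<le> length w"
    proof
      fix v assume v: "v \<in> V"
      show "l v \<le> length w"
      proof (cases "v = []")
        case False
        then show ?thesis
          using hs_honest[of "length v"] v unfolding l_def V_def honest_idx_def by simp
      qed (simp add: l_def hs_def)
    qed
    show "l [] = 0" by (simp add: l_def hs_def)
    show "\<forall>u\<in>V. \<forall>v\<in>V. strict_prefix u v \<longrightarrow> l u < l v"
      using l_mono prefix_length_less by blast
    show "\<forall>i. honest_idx w i \<longrightarrow> card {v\<in>V. l v = i} = 1"
    proof (intro allI impI)
      fix i assume "honest_idx w i"
      then have "i \<in> set hs" using set_ns by (simp add: hs_def)
      then obtain j where j: "j < length hs" "hs ! j = i" by (meson in_set_conv_nth)
      have "distinct hs" using sorted by (auto simp: hs_def strict_sorted_iff)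
      then have "{v\<in>V. l v = i} = {replicate j 0}"
        using j V_replicate by (auto simp: l_def V_def hs_def nth_eq_iff_index_eq)
      then show "card {v\<in>V. l v = i} = 1" by simp
    qed
    show "\<forall>u\<in>V. \<forall>v\<in>V. honest_idx w (l u) \<and> honest_idx w (l v) \<and> l u < l v
        \<longrightarrow> length u < length v"
      using l_mono V_replicate by (metis less_irrefl less_asym linorder_neqE_nat)
  qed
  then show ?thesis unfolding V_def l_def hs_def .
qed

text \<open>The witness is the chain whose vertex at depth $j$ carries the $j$-th honest index.\<close>

lemma closed_fork_exists: "\<exists>V l. is_fork w V l \<and> closed_fork w V l"
proof -
  define ns where "ns = filter (honest_idx w) [0..<Suc (length w)]"
  have set_ns: "set ns = {i. honest_idx w i}"
    unfolding ns_def by (auto simp: honest_idx_def simp del: upt_Suc)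
  have "sorted_wrt (<) ns"
    unfolding ns_def by (intro sorted_wrt_filter sorted_wrt_upt)
  then have sorted: "sorted_wrt (<) (0 # ns)"
    using set_ns by (auto simp: honest_idx_def)
  have "honest_idx w (ns ! (j - 1))" if "0 < j" "j \<le> length ns" for j
    using that set_ns nth_mem[of "j - 1" ns] by auto
  then have "closed_fork w {v. set v \<subseteq> {0} \<and> length v \<le> length ns} (\<lambda>v. (0 # ns) ! length v)"
    unfolding closed_fork_def honest_vertex_def by (auto simp: nth_Cons')
  with chain_is_fork[OF sorted set_ns] show ?thesis by blast
qed

lemma mu_fork_attained:
  assumes f: "is_fork w V l"
  obtains t1 t2 where "t1 \<in> V" "t2 \<in> V" "disjoint_over m l t1 t2"
    "mu_fork m w V l = min (reach w V l t1) (reach w V l t2)"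
proof -
  let ?S = "{min (reach w V l t1) (reach w V l t2) | t1 t2.
              t1 \<in> V \<and> t2 \<in> V \<and> disjoint_over m l t1 t2}"
  have "?S \<subseteq> (\<lambda>(t1, t2). min (reach w V l t1) (reach w V l t2)) ` (V \<times> V)" by auto
  then have "finite ?S" using fork_finite[OF f] finite_subset by blast
  moreover have "reach w V l [] \<in> ?S"
    using fork_root[OF f] unfolding disjoint_over_def by force
  ultimately have "mu_fork m w V l \<in> ?S" unfolding mu_fork_def by (intro Max_in) auto
  then show ?thesis using that by blast
qed

lemma mu_le_margin: "mu x y \<le> snd (margin_state x y)"
proof -
  let ?S = "{mu_fork (length x) (x @ y) V l | V l. is_fork (x @ y) V l \<and> closed_fork (x @ y) V l}"
  have bounds: "- int (length (x @ y)) \<le> s \<and> s \<le> snd (margin_state x y)" if "s \<in> ?S" for s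
  proof -
    obtain V l where s: "s = mu_fork (length x) (x @ y) V l"
      and f: "is_fork (x @ y) V l" and c: "closed_fork (x @ y) V l"
      using \<open>s \<in> ?S\<close> by blast
    obtain t1 t2 where "t1 \<in> V" "t2 \<in> V" "disjoint_over (length x) l t1 t2"
      "s = min (reach (x @ y) V l t1) (reach (x @ y) V l t2)"
      using mu_fork_attained[OF f] s by metis
    then show ?thesis
      using min_reach_le_margin[OF f c] reach_ge_neg_length[OF f] by fastforce
  qed
  have "?S \<subseteq> {- int (length (x @ y))..snd (margin_state x y)}"
    using bounds by (intro subsetI) (simp only: atLeastAtMost_iff)
  then have "finite ?S" by (rule finite_subset) simp
  moreover have "?S \<noteq> {}" using closed_fork_exists[of "x @ y"] by blast
  ultimately have "mu x y \<in> ?S" unfolding mu_def by (rule Max_in)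
  then show ?thesis using bounds by blast
qed

section \<open>A potential function\<close>

definition pot_gamma :: "real \<Rightarrow> real" where
  "pot_gamma \<epsilon> = 1 + \<epsilon>\<^sup>2 / 4"

definition pot_alpha :: "real \<Rightarrow> real" where
  "pot_alpha \<epsilon> = 1 + \<epsilon>"

definition pot_lambda :: "real \<Rightarrow> real" where
  "pot_lambda \<epsilon> = 1 - \<epsilon> ^ 3 / 8"

definition potential :: "real \<Rightarrow> nat \<times> int \<Rightarrow> real" where
  "potential \<epsilon> s = pot_gamma \<epsilon> ^ fst s * (pot_gamma \<epsilon> / pot_alpha \<epsilon>) ^ nat (- snd s)"

text \<open>The second conjunct makes the
  expected contraction by \<open>pot_lambda \<epsilon>\<close> hold whenever the probability of an adversarial
  symbol is at most $(1 - \epsilon)/2$, not only when it is equal to it.\<close>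

definition contracting :: "real \<Rightarrow> real \<Rightarrow> real \<Rightarrow> bool" where
  "contracting \<epsilon> A H \<longleftrightarrow>
     (1 - \<epsilon>) / 2 * A + (1 + \<epsilon>) / 2 * H \<le> pot_lambda \<epsilon> \<and> H \<le> pot_lambda \<epsilon>"

lemma pot_constants_bounds:
  assumes "0 < \<epsilon>" "\<epsilon> < 1"
  shows "1 \<le> pot_gamma \<epsilon>" "pot_gamma \<epsilon> \<le> pot_alpha \<epsilon>" "0 < pot_lambda \<epsilon>"
proof -
  have "\<epsilon>\<^sup>2 \<le> \<epsilon>" "\<epsilon> ^ 3 < 1" using assms by (simp_all add: power2_eq_square power_less_one_iff)
  then show "1 \<le> pot_gamma \<epsilon>" "pot_gamma \<epsilon> \<le> pot_alpha \<epsilon>" "0 < pot_lambda \<epsilon>"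
    using assms unfolding pot_gamma_def pot_alpha_def pot_lambda_def by auto
qed

lemma contracting_mono:
  assumes "0 < \<epsilon>" "\<epsilon> < 1" "contracting \<epsilon> A' H'" "A \<le> A'" "H \<le> H'"
  shows "contracting \<epsilon> A H"
proof -
  have "(1 - \<epsilon>) / 2 * A + (1 + \<epsilon>) / 2 * H \<le> (1 - \<epsilon>) / 2 * A' + (1 + \<epsilon>) / 2 * H'"
    using assms by (intro add_mono mult_left_mono) auto
  then show ?thesis using assms(3,5) unfolding contracting_def by linarith
qed

lemma contracting_gamma:
  assumes "0 < \<epsilon>" "\<epsilon> < 1"
  shows "contracting \<epsilon> (pot_gamma \<epsilon>) (1 / pot_gamma \<epsilon>)"
proof -
  let ?g = "pot_gamma \<epsilon>" and ?l = "pot_lambda \<epsilon>"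
  have g: "0 < ?g" using pot_constants_bounds[OF assms] by simp
  have pow: "\<epsilon> ^ 4 \<le> \<epsilon> ^ 3" "\<epsilon> ^ 3 \<le> \<epsilon>\<^sup>2" "\<epsilon> ^ 5 \<le> \<epsilon>\<^sup>2" "0 \<le> \<epsilon> ^ 3"
    using assms by (simp_all add: power_decreasing)
  have "?l * ?g - ((1 - \<epsilon>) / 2 * ?g * ?g + (1 + \<epsilon>) / 2) = \<epsilon> ^ 3 / 8 - \<epsilon> ^ 4 / 32"
    unfolding pot_lambda_def pot_gamma_def by (simp add: field_simps eval_nat_numeral)
  then have "(1 - \<epsilon>) / 2 * ?g * ?g + (1 + \<epsilon>) / 2 \<le> ?l * ?g" using pow by linarith
  then have avg: "(1 - \<epsilon>) / 2 * ?g + (1 + \<epsilon>) / 2 * (1 / ?g) \<le> ?l"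
    using g by (simp add: field_simps)
  have "?l * ?g - 1 = \<epsilon>\<^sup>2 / 4 - \<epsilon> ^ 3 / 8 - \<epsilon> ^ 5 / 32"
    unfolding pot_lambda_def pot_gamma_def by (simp add: field_simps eval_nat_numeral)
  then have "1 \<le> ?l * ?g" using pow by linarith
  then have "1 / ?g \<le> ?l" using g by (simp add: field_simps)
  with avg show ?thesis unfolding contracting_def ..
qed

lemma contracting_alpha:
  assumes "0 < \<epsilon>" "\<epsilon> < 1"
  shows "contracting \<epsilon> (pot_alpha \<epsilon>) (pot_gamma \<epsilon> / pot_alpha \<epsilon>)"
proof -
  let ?a = "pot_alpha \<epsilon>" and ?g = "pot_gamma \<epsilon>" and ?l = "pot_lambda \<epsilon>"
  have a: "0 < ?a" using assms by (simp add: pot_alpha_def)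
  have pow: "\<epsilon> ^ 4 \<le> \<epsilon> ^ 3" "\<epsilon> ^ 3 \<le> \<epsilon>\<^sup>2" "\<epsilon>\<^sup>2 \<le> \<epsilon>"
    using assms power_decreasing[of 1 2 \<epsilon>] by (simp_all add: power_decreasing)
  have "?l * ?a - ((1 - \<epsilon>) / 2 * ?a * ?a + (1 + \<epsilon>) / 2 * ?g) = (1 + \<epsilon>) * \<epsilon>\<^sup>2 * (3 - \<epsilon>) / 8"
    unfolding pot_lambda_def pot_gamma_def pot_alpha_def by (simp add: field_simps eval_nat_numeral)
  moreover have "0 \<le> (1 + \<epsilon>) * \<epsilon>\<^sup>2 * (3 - \<epsilon>) / 8" using assms by simp
  ultimately have "(1 - \<epsilon>) / 2 * ?a * ?a + (1 + \<epsilon>) / 2 * ?g \<le> ?l * ?a" by linarith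
  then have avg: "(1 - \<epsilon>) / 2 * ?a + (1 + \<epsilon>) / 2 * (?g / ?a) \<le> ?l"
    using a by (simp add: field_simps)
  have "?l * ?a - ?g = \<epsilon> - \<epsilon>\<^sup>2 / 4 - \<epsilon> ^ 3 / 8 - \<epsilon> ^ 4 / 8"
    unfolding pot_lambda_def pot_gamma_def pot_alpha_def by (simp add: field_simps eval_nat_numeral)
  then have "?g \<le> ?l * ?a" using pow assms by linarith
  then have "?g / ?a \<le> ?l" using a by (simp add: field_simps)
  with avg show ?thesis unfolding contracting_def ..
qed

lemma contracting_scaled:
  assumes "contracting \<epsilon> A H" "0 \<le> x"
  shows "(1 - \<epsilon>) / 2 * (A * x) + (1 + \<epsilon>) / 2 * (H * x) \<le> pot_lambda \<epsilon> * x"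
    and "H * x \<le> pot_lambda \<epsilon> * x"
proof -
  have "((1 - \<epsilon>) / 2 * A + (1 + \<epsilon>) / 2 * H) * x \<le> pot_lambda \<epsilon> * x"
    using assms unfolding contracting_def by (intro mult_right_mono) auto
  then show "(1 - \<epsilon>) / 2 * (A * x) + (1 + \<epsilon>) / 2 * (H * x) \<le> pot_lambda \<epsilon> * x"
    by (simp add: algebra_simps)
  show "H * x \<le> pot_lambda \<epsilon> * x"
    using assms unfolding contracting_def by (intro mult_right_mono) auto
qed

lemma gamma_rho_step:
  assumes e: "0 < \<epsilon>" "\<epsilon> < 1"
  shows "(1 - \<epsilon>) / 2 * pot_gamma \<epsilon> ^ rho_step r True + (1 + \<epsilon>) / 2 * pot_gamma \<epsilon> ^ rho_step r False
      \<le> pot_lambda \<epsilon> * pot_gamma \<epsilon> ^ r + \<epsilon>\<^sup>2 / 8" (is "?avg \<le> ?bound")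
    and "pot_gamma \<epsilon> ^ rho_step r False \<le> pot_lambda \<epsilon> * pot_gamma \<epsilon> ^ r + \<epsilon>\<^sup>2 / 8"
    (is "?honest \<le> _")
proof -
  have "?avg \<le> ?bound \<and> ?honest \<le> ?bound"
  proof (cases r)
    case 0
    have "\<epsilon> ^ 3 \<le> \<epsilon>\<^sup>2" using e by (simp add: power_decreasing)
    then show ?thesis
      using 0 unfolding rho_step_def pot_gamma_def pot_lambda_def
      by (simp add: field_simps eval_nat_numeral)
  next
    case (Suc r')
    have g: "0 < pot_gamma \<epsilon>" using pot_constants_bounds[OF e] by simp
    have "pot_gamma \<epsilon> ^ rho_step r True = pot_gamma \<epsilon> * pot_gamma \<epsilon> ^ r"
      and "pot_gamma \<epsilon> ^ rho_step r False = 1 / pot_gamma \<epsilon> * pot_gamma \<epsilon> ^ r"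
      using g Suc by (simp_all add: rho_step_def)
    then show ?thesis
      using contracting_scaled[OF contracting_gamma[OF e], of "pot_gamma \<epsilon> ^ r"] g
      by (auto intro: add_increasing2)
  qed
  then show "?avg \<le> ?bound" "?honest \<le> ?bound" by auto
qed

lemma potential_nonneg: "0 < \<epsilon> \<Longrightarrow> \<epsilon> < 1 \<Longrightarrow> 0 \<le> potential \<epsilon> s"
  using pot_constants_bounds[of \<epsilon>] unfolding potential_def pot_alpha_def by simp

lemma one_le_potential: "0 < \<epsilon> \<Longrightarrow> \<epsilon> < 1 \<Longrightarrow> 0 \<le> snd s \<Longrightarrow> 1 \<le> potential \<epsilon> s"
  using pot_constants_bounds[of \<epsilon>] unfolding potential_def by simp

lemma potential_diag: "potential \<epsilon> (r, int r) = pot_gamma \<epsilon> ^ r"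
  by (simp add: potential_def)

lemma potential_margin_step:
  assumes e: "0 < \<epsilon>" "\<epsilon> < 1" and inv: "snd s \<le> int (fst s)"
  obtains A H where "potential \<epsilon> (margin_step s True) = A * potential \<epsilon> s"
    "potential \<epsilon> (margin_step s False) = H * potential \<epsilon> s" "contracting \<epsilon> A H"
proof -
  obtain r \<mu> where s: "s = (r, \<mu>)" by fastforce
  let ?g = "pot_gamma \<epsilon>" and ?a = "pot_alpha \<epsilon>"
  have g: "1 \<le> ?g" "?g \<le> ?a" and a: "0 < ?a" using pot_constants_bounds[OF e] by auto
  have alpha: "contracting \<epsilon> ?a (?g / ?a)" using contracting_alpha[OF e] .
  consider "0 \<le> \<mu>" "0 < r" | "\<mu> = 0" "r = 0" | d where "nat (- \<mu>) = Suc d"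
    using inv s by (cases "nat (- \<mu>)") auto
  then show ?thesis
  proof cases
    case 1
    then show ?thesis
      using that[of ?g "1 / ?g"] contracting_gamma[OF e] g
      by (cases r) (auto simp: s potential_def margin_step_def rho_step_def)
  next
    case 2
    then show ?thesis
      using that[of ?g "?g / ?a"] contracting_mono[OF e alpha g(2) order.refl]
      by (simp add: s potential_def margin_step_def rho_step_def)
  next
    case (3 d)
    then have \<mu>: "\<mu> < 0" "nat (- (\<mu> + 1)) = d" "nat (- (\<mu> - 1)) = Suc (Suc d)" by auto
    have T: "potential \<epsilon> (margin_step s True) = ?a * potential \<epsilon> s"
      using \<mu> 3 a g by (simp add: s potential_def margin_step_def rho_step_def field_simps)
    define H where "H = (if 0 < r then 1 / ?a else ?g / ?a)"
    have F: "potential \<epsilon> (margin_step s False) = H * potential \<epsilon> s"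
      using \<mu> 3 a g by (cases r) (simp_all add: H_def s potential_def margin_step_def
          rho_step_def field_simps)
    have "H \<le> ?g / ?a" using g a by (simp add: H_def divide_right_mono)
    then show ?thesis using that[OF T F] contracting_mono[OF e alpha order.refl] by blast
  qed
qed

lemma potential_step:
  assumes e: "0 < \<epsilon>" "\<epsilon> < 1" and inv: "snd s \<le> int (fst s)"
  shows "(1 - \<epsilon>) / 2 * potential \<epsilon> (margin_step s True)
      + (1 + \<epsilon>) / 2 * potential \<epsilon> (margin_step s False)
      \<le> pot_lambda \<epsilon> * potential \<epsilon> s"
    and "potential \<epsilon> (margin_step s False) \<le> pot_lambda \<epsilon> * potential \<epsilon> s"
proof -
  obtain A H where "potential \<epsilon> (margin_step s True) = A * potential \<epsilon> s"
    "potential \<epsilon> (margin_step s False) = H * potential \<epsilon> s" "contracting \<epsilon> A H"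
    using potential_margin_step[OF assms] .
  then show "(1 - \<epsilon>) / 2 * potential \<epsilon> (margin_step s True)
      + (1 + \<epsilon>) / 2 * potential \<epsilon> (margin_step s False) \<le> pot_lambda \<epsilon> * potential \<epsilon> s"
    and "potential \<epsilon> (margin_step s False) \<le> pot_lambda \<epsilon> * potential \<epsilon> s"
    using contracting_scaled potential_nonneg[OF e] by simp_all
qed

section \<open>Expectations under the martingale condition\<close>

lemma prob_eq_sum:
  assumes "finite A" "set_pmf p \<subseteq> A"
  shows "measure_pmf.prob p S = (\<Sum>w\<in>A \<inter> S. pmf p w)"
proof -
  have "measure_pmf.prob p S = measure_pmf.prob p (A \<inter> S)"
    using assms(2) by (intro measure_eq_AE AE_pmfI) auto
  also have "\<dots> = (\<Sum>w\<in>A \<inter> S. pmf p w)"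
    using assms(1) by (simp add: measure_measure_pmf_finite)
  finally show ?thesis .
qed

lemma expectation_eq_sum:
  assumes "finite A" "set_pmf p \<subseteq> A"
  shows "measure_pmf.expectation p f = (\<Sum>w\<in>A. pmf p w * f w)"
  using integral_measure_pmf_real[OF assms(1), of p f] assms(2) by (auto simp: mult.commute)

lemma biased_average_le:
  fixes PT PF q a b K :: real
  assumes "0 \<le> PT" "0 \<le> PF" "PT \<le> q * (PT + PF)" "q * a + (1 - q) * b \<le> K" "b \<le> K"
  shows "PT * a + PF * b \<le> (PT + PF) * K"
proof (cases "a \<le> b")
  case True
  then have "PT * a + PF * b \<le> (PT + PF) * b"
    using assms(1) by (simp add: algebra_simps mult_left_mono)
  also have "\<dots> \<le> (PT + PF) * K" using assms by (intro mult_left_mono) auto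
  finally show ?thesis .
next
  case False
  then have "PT * (a - b) \<le> (q * (PT + PF)) * (a - b)"
    using assms(3) by (intro mult_right_mono) auto
  then have "PT * a + PF * b \<le> (PT + PF) * (q * a + (1 - q) * b)" by (simp add: algebra_simps)
  also have "\<dots> \<le> (PT + PF) * K" using assms by (intro mult_left_mono) auto
  finally show ?thesis .
qed

lemma sum_prefix_extension_le:
  fixes p :: "bool list pmf" and Psi :: "bool list \<Rightarrow> real"
  assumes A: "finite A" "set_pmf p \<subseteq> A" "\<And>w. w \<in> A \<Longrightarrow> t < length w" and u: "length u = t"
    and bias: "measure_pmf.prob p {w. take t w = u \<and> w ! t}
      \<le> q * measure_pmf.prob p {w. take t w = u}"
    and avg: "q * Psi (u @ [True]) + (1 - q) * Psi (u @ [False]) \<le> K"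
    and honest: "Psi (u @ [False]) \<le> K"
  shows "(\<Sum>w\<in>{w\<in>A. take t w = u}. pmf p w * Psi (take (Suc t) w))
      \<le> measure_pmf.prob p {w. take t w = u} * K"
proof -
  define B where "B = {w\<in>A. take t w = u}"
  define PT where "PT = (\<Sum>w\<in>B \<inter> {w. w ! t}. pmf p w)"
  define PF where "PF = (\<Sum>w\<in>B \<inter> - {w. w ! t}. pmf p w)"
  have finB: "finite B" unfolding B_def using A(1) by simp
  have "take (Suc t) w = u @ [w ! t]" if "w \<in> B" for w
    using that A(3) unfolding B_def by (auto simp: take_Suc_conv_app_nth)
  then have "(\<Sum>w\<in>B. pmf p w * Psi (take (Suc t) w))
      = (\<Sum>w\<in>B. if w ! t then pmf p w * Psi (u @ [True]) else pmf p w * Psi (u @ [False]))"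
    by (intro sum.cong) auto
  also have "\<dots> = PT * Psi (u @ [True]) + PF * Psi (u @ [False])"
    unfolding PT_def PF_def by (simp add: sum.If_cases[OF finB] sum_distrib_right)
  finally have lhs: "(\<Sum>w\<in>B. pmf p w * Psi (take (Suc t) w))
      = PT * Psi (u @ [True]) + PF * Psi (u @ [False])" .
  have "PT = measure_pmf.prob p {w. take t w = u \<and> w ! t}"
    unfolding PT_def B_def using prob_eq_sum[OF A(1,2)] by (simp add: Int_def conj_assoc)
  moreover have PT_PF: "PT + PF = measure_pmf.prob p {w. take t w = u}"
    unfolding PT_def PF_def using sum.If_cases[OF finB, of "\<lambda>w. w ! t" "pmf p" "pmf p"]
      prob_eq_sum[OF A(1,2)] by (simp add: B_def Int_def)
  ultimately have "PT \<le> q * (PT + PF)" using bias by simp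
  moreover have "0 \<le> PT" "0 \<le> PF" unfolding PT_def PF_def by (auto intro: sum_nonneg)
  ultimately have "PT * Psi (u @ [True]) + PF * Psi (u @ [False]) \<le> (PT + PF) * K"
    using biased_average_le[OF _ _ _ avg honest] by blast
  then show ?thesis using lhs PT_PF unfolding B_def by simp
qed

lemma expectation_take_Suc_le:
  fixes p :: "bool list pmf" and Psi :: "bool list \<Rightarrow> real"
  assumes support: "set_pmf p \<subseteq> {w. length w = n}" and t: "t < n"
    and bias: "\<And>u. length u = t \<Longrightarrow> measure_pmf.prob p {w. take t w = u \<and> w ! t}
      \<le> q * measure_pmf.prob p {w. take t w = u}"
    and avg: "\<And>u. length u = t \<Longrightarrow>
      q * Psi (u @ [True]) + (1 - q) * Psi (u @ [False]) \<le> lm * Psi u + c"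
    and honest: "\<And>u. length u = t \<Longrightarrow> Psi (u @ [False]) \<le> lm * Psi u + c"
  shows "measure_pmf.expectation p (\<lambda>w. Psi (take (Suc t) w))
      \<le> lm * measure_pmf.expectation p (\<lambda>w. Psi (take t w)) + c"
proof -
  define A where "A = {w :: bool list. length w = n}"
  define U where "U = take t ` A"
  define B where "B u = {w\<in>A. take t w = u}" for u
  have finA: "finite A" unfolding A_def
    using finite_lists_length_eq[of "UNIV :: bool set" n] by simp
  have supp: "set_pmf p \<subseteq> A" using support unfolding A_def .
  have prob_B: "measure_pmf.prob p {w. take t w = u} = (\<Sum>w\<in>B u. pmf p w)" for u
    using prob_eq_sum[OF finA supp] unfolding B_def by (simp add: Int_def)
  have "measure_pmf.expectation p (\<lambda>w. Psi (take (Suc t) w))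
      = (\<Sum>u\<in>U. \<Sum>w\<in>B u. pmf p w * Psi (take (Suc t) w))"
    unfolding expectation_eq_sum[OF finA supp] U_def B_def by (rule sum.image_gen[OF finA])
  also have "\<dots> \<le> (\<Sum>u\<in>U. measure_pmf.prob p {w. take t w = u} * (lm * Psi u + c))"
  proof (intro sum_mono)
    fix u assume "u \<in> U"
    then have u: "length u = t" using t unfolding U_def A_def by auto
    show "(\<Sum>w\<in>B u. pmf p w * Psi (take (Suc t) w))
        \<le> measure_pmf.prob p {w. take t w = u} * (lm * Psi u + c)"
      unfolding B_def using t
      by (intro sum_prefix_extension_le[OF finA supp _ u bias[OF u] avg[OF u] honest[OF u]])
        (simp add: A_def)
  qed
  also have "\<dots> = lm * (\<Sum>u\<in>U. \<Sum>w\<in>B u. pmf p w * Psi (take t w)) + c * (\<Sum>u\<in>U. \<Sum>w\<in>B u. pmf p w)"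
    unfolding prob_B
    by (simp add: B_def algebra_simps sum.distrib sum_distrib_left sum_distrib_right)
  also have "(\<Sum>u\<in>U. \<Sum>w\<in>B u. pmf p w * Psi (take t w))
      = measure_pmf.expectation p (\<lambda>w. Psi (take t w))"
    unfolding expectation_eq_sum[OF finA supp] U_def B_def
      by (rule sum.image_gen[OF finA, symmetric])
  also have "(\<Sum>u\<in>U. \<Sum>w\<in>B u. pmf p w) = 1"
    using sum.image_gen[OF finA, of "pmf p" "take t"] sum_pmf_eq_1[OF finA supp]
    unfolding U_def B_def by simp
  finally show ?thesis by simp
qed

lemma expectation_gamma_rho_le:
  assumes e: "0 < \<epsilon>" "\<epsilon> < 1" and support: "set_pmf p \<subseteq> {w. length w = n}"
    and mart: "eps_martingale \<epsilon> n p" and "t \<le> n"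
  shows "measure_pmf.expectation p (\<lambda>w. pot_gamma \<epsilon> ^ rho (take t w)) \<le> 1 / \<epsilon>"
  using \<open>t \<le> n\<close>
proof (induction t)
  case 0
  then show ?case using e by (simp add: rho_def)
next
  case (Suc t)
  have t: "t < n" using Suc.prems by simp
  have q: "1 - (1 - \<epsilon>) / 2 = (1 + \<epsilon>) / 2" by (simp add: field_simps)
  have "measure_pmf.expectation p (\<lambda>w. pot_gamma \<epsilon> ^ rho (take (Suc t) w))
      \<le> pot_lambda \<epsilon> * measure_pmf.expectation p (\<lambda>w. pot_gamma \<epsilon> ^ rho (take t w)) + \<epsilon>\<^sup>2 / 8"
  proof (rule expectation_take_Suc_le[OF support t, where q = "(1 - \<epsilon>) / 2"])
    fix u :: "bool list" assume "length u = t"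
    then show "measure_pmf.prob p {w. take t w = u \<and> w ! t}
        \<le> (1 - \<epsilon>) / 2 * measure_pmf.prob p {w. take t w = u}"
      using mart t unfolding eps_martingale_def by blast
  next
    fix u :: "bool list"
    show "(1 - \<epsilon>) / 2 * pot_gamma \<epsilon> ^ rho (u @ [True])
        + (1 - (1 - \<epsilon>) / 2) * pot_gamma \<epsilon> ^ rho (u @ [False])
        \<le> pot_lambda \<epsilon> * pot_gamma \<epsilon> ^ rho u + \<epsilon>\<^sup>2 / 8"
      unfolding q rho_snoc by (rule gamma_rho_step(1)[OF e])
    show "pot_gamma \<epsilon> ^ rho (u @ [False]) \<le> pot_lambda \<epsilon> * pot_gamma \<epsilon> ^ rho u + \<epsilon>\<^sup>2 / 8"
      unfolding rho_snoc by (rule gamma_rho_step(2)[OF e])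
  qed
  also have "\<dots> \<le> pot_lambda \<epsilon> * (1 / \<epsilon>) + \<epsilon>\<^sup>2 / 8"
    using Suc pot_constants_bounds[OF e] by (intro add_right_mono mult_left_mono) auto
  also have "\<dots> = 1 / \<epsilon>"
    unfolding pot_lambda_def using e by (simp add: field_simps eval_nat_numeral)
  finally show ?case .
qed

lemma expectation_potential_le:
  assumes e: "0 < \<epsilon>" "\<epsilon> < 1" and support: "set_pmf p \<subseteq> {w. length w = m + k}"
    and mart: "eps_martingale \<epsilon> (m + k) p" and "j \<le> k"
  shows "measure_pmf.expectation p
      (\<lambda>w. potential \<epsilon> (margin_state (take m w) (drop m (take (m + j) w)))) \<le> pot_lambda \<epsilon> ^ j / \<epsilon>"
  using \<open>j \<le> k\<close>
proof (induction j)
  case 0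
  then show ?case
    using expectation_gamma_rho_le[OF e support mart, of m]
    by (simp add: margin_state_Nil potential_diag)
next
  case (Suc j)
  let ?Psi = "\<lambda>u. potential \<epsilon> (margin_state (take m u) (drop m u))"
  have t: "m + j < m + k" using Suc.prems by simp
  have q: "1 - (1 - \<epsilon>) / 2 = (1 + \<epsilon>) / 2" by (simp add: field_simps)
  have snoc: "?Psi (u @ [b]) = potential \<epsilon> (margin_step (margin_state (take m u) (drop m u)) b)"
    if "length u = m + j" for u b
    using that by (simp add: margin_state_snoc)
  have "measure_pmf.expectation p (\<lambda>w. ?Psi (take (Suc (m + j)) w))
      \<le> pot_lambda \<epsilon> * measure_pmf.expectation p (\<lambda>w. ?Psi (take (m + j) w)) + 0"
  proof (rule expectation_take_Suc_le[OF support t, where q = "(1 - \<epsilon>) / 2"])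
    fix u :: "bool list" assume "length u = m + j"
    then show "measure_pmf.prob p {w. take (m + j) w = u \<and> w ! (m + j)}
        \<le> (1 - \<epsilon>) / 2 * measure_pmf.prob p {w. take (m + j) w = u}"
      using mart t unfolding eps_martingale_def by blast
  next
    fix u :: "bool list" assume "length u = m + j"
    then show "(1 - \<epsilon>) / 2 * ?Psi (u @ [True]) + (1 - (1 - \<epsilon>) / 2) * ?Psi (u @ [False])
        \<le> pot_lambda \<epsilon> * ?Psi u + 0"
      unfolding q snoc[OF \<open>length u = m + j\<close>]
        using potential_step(1)[OF e snd_margin_state_le] by simp
  next
    fix u :: "bool list" assume "length u = m + j"
    then show "?Psi (u @ [False]) \<le> pot_lambda \<epsilon> * ?Psi u + 0"
      unfolding snoc[OF \<open>length u = m + j\<close>]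
        using potential_step(2)[OF e snd_margin_state_le] by simp
  qed
  also have "\<dots> = pot_lambda \<epsilon> * measure_pmf.expectation p
      (\<lambda>w. potential \<epsilon> (margin_state (take m w) (drop m (take (m + j) w))))"
    by (simp add: min_def)
  also have "\<dots> \<le> pot_lambda \<epsilon> * (pot_lambda \<epsilon> ^ j / \<epsilon>)"
    using Suc pot_constants_bounds[OF e] by (intro mult_left_mono) auto
  finally show ?case by (simp add: min_def)
qed

lemma prob_mu_nonneg_le:
  assumes e: "0 < \<epsilon>" "\<epsilon> < 1" and support: "set_pmf p \<subseteq> {w. length w = m + k}"
    and mart: "eps_martingale \<epsilon> (m + k) p"
  shows "measure_pmf.prob p {w. 0 \<le> mu (take m w) (drop m w)} \<le> pot_lambda \<epsilon> ^ k / \<epsilon>"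
proof -
  define G where "G w = potential \<epsilon> (margin_state (take m w) (drop m (take (m + k) w)))" for w
  have "finite (set_pmf p)"
    using support finite_lists_length_eq[of "UNIV :: bool set" "m + k"] finite_subset by auto
  then have "integrable p G" by (rule integrable_measure_pmf_finite)
  have "{w. 0 \<le> mu (take m w) (drop m w)} \<inter> set_pmf p \<subseteq> {w \<in> space p. 1 \<le> G w}"
  proof
    fix w assume w: "w \<in> {w. 0 \<le> mu (take m w) (drop m w)} \<inter> set_pmf p"
    then have "take (m + k) w = w" using support by auto
    moreover have "0 \<le> snd (margin_state (take m w) (drop m w))"
      using w mu_le_margin[of "take m w" "drop m w"] by auto
    ultimately show "w \<in> {w \<in> space p. 1 \<le> G w}"
      using one_le_potential[OF e] unfolding G_def by simp
  qed
  then have "measure_pmf.prob p {w. 0 \<le> mu (take m w) (drop m w)}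
      \<le> measure p {w \<in> space p. 1 \<le> G w}"
    by (subst measure_Int_set_pmf[symmetric]) (rule measure_pmf.finite_measure_mono, auto)
  also have "\<dots> \<le> measure_pmf.expectation p G / 1"
    by (rule integral_Markov_inequality_measure[OF \<open>integrable p G\<close>, where A = UNIV])
      (auto simp: G_def potential_nonneg[OF e])
  also have "\<dots> \<le> pot_lambda \<epsilon> ^ k / \<epsilon>"
    using expectation_potential_le[OF e support mart order.refl] unfolding G_def by simp
  finally show ?thesis .
qed

lemma min_one_lambda_pow_le_exp:
  assumes e: "0 < \<epsilon>" "\<epsilon> < 1" and P: "P \<le> 1" "P \<le> pot_lambda \<epsilon> ^ k / \<epsilon>"
  shows "P \<le> 3 * exp (- (\<epsilon> ^ 4 * real k / 64))"
proof -
  define x where "x = \<epsilon> ^ 4 * real k / 64"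
  define K where "K = \<epsilon> ^ 3 * real k / 8"
  show ?thesis
  proof (cases "exp x \<le> 3")
    case True
    then have "1 \<le> 3 * exp (- x)" by (simp add: exp_minus field_simps)
    then show ?thesis using P(1) x_def by simp
  next
    case False
    then have "exp 1 < exp x" using exp_le by linarith
    then have x: "1 < x" by simp
    have "pot_lambda \<epsilon> \<le> exp (- (\<epsilon> ^ 3 / 8))"
      unfolding pot_lambda_def using exp_ge_add_one_self[of "- (\<epsilon> ^ 3 / 8)"] by simp
    then have "pot_lambda \<epsilon> ^ k \<le> exp (- (\<epsilon> ^ 3 / 8)) ^ k"
      using pot_constants_bounds[OF e] by (intro power_mono) auto
    also have "\<dots> = exp (- K)" by (simp add: K_def exp_of_nat_mult[symmetric] algebra_simps)
    finally have lam: "pot_lambda \<epsilon> ^ k \<le> exp (- K)" .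
    have "K - x = x * (8 - \<epsilon>) / \<epsilon>"
      unfolding K_def x_def using e by (simp add: field_simps eval_nat_numeral)
    moreover have "1 \<le> x * (8 - \<epsilon>)" using x e mult_mono[of 1 x 1 "8 - \<epsilon>"] by simp
    ultimately have "1 / \<epsilon> \<le> K - x" using e by (simp add: divide_right_mono)
    then have "1 / \<epsilon> \<le> exp (K - x)" using exp_ge_add_one_self[of "K - x"] by linarith
    then have "exp (- K) * (1 / \<epsilon>) \<le> exp (- K) * exp (K - x)" by (intro mult_left_mono) auto
    also have "\<dots> = exp (- x)" by (simp flip: exp_add)
    finally have "exp (- K) / \<epsilon> \<le> exp (- x)" by simp
    moreover have "pot_lambda \<epsilon> ^ k / \<epsilon> \<le> exp (- K) / \<epsilon>"
      using lam e by (simp add: divide_right_mono)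
    moreover have "exp (- x) \<le> 3 * exp (- x)" by simp
    ultimately show ?thesis using P(2) unfolding x_def by linarith
  qed
qed

theorem mainTheorem16:
  shows "\<exists>C::real. \<forall>\<epsilon>::real. 0 < \<epsilon> \<and> \<epsilon> < 1 \<longrightarrow>
    (\<forall>(m::nat) (k::nat) (p :: bool list pmf).
       set_pmf p \<subseteq> {w. length w = m + k} \<and> eps_martingale \<epsilon> (m + k) p \<longrightarrow>
       measure_pmf.prob p {w. mu (take m w) (drop m w) \<ge> 0}
         \<le> 3 * exp (- (\<epsilon> ^ 4 * (1 - C * \<epsilon>) * real k / 64)))"
proof (intro exI[of _ "0::real"] allI impI)
  fix \<epsilon> :: real and m k :: nat and p :: "bool list pmf"
  assume "0 < \<epsilon> \<and> \<epsilon> < 1"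
    and "set_pmf p \<subseteq> {w. length w = m + k} \<and> eps_martingale \<epsilon> (m + k) p"
  then have e: "0 < \<epsilon>" "\<epsilon> < 1" and support: "set_pmf p \<subseteq> {w. length w = m + k}"
    and mart: "eps_martingale \<epsilon> (m + k) p" by auto
  show "measure_pmf.prob p {w. mu (take m w) (drop m w) \<ge> 0}
      \<le> 3 * exp (- (\<epsilon> ^ 4 * (1 - 0 * \<epsilon>) * real k / 64))"
    using min_one_lambda_pow_le_exp[OF e measure_pmf.prob_le_1 prob_mu_nonneg_le[OF e support mart]]
    by simp
qed

end
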